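(* Let $A\in\mathbb{R}^{n\times n}$ with $\rho(A)<1$, $C\in\mathbb{R}^{m\times n}$, and $Q\in\mathbb{R}^{n\times n}$, $R\in\mathbb{R}^{m\times m}$ symmetric positive definite, with $(A,C)$ observable and $(A,Q^{1/2})$ controllable. Let $\bar P$ be the unique stabilizing positive definite solution of $$\bar P = A\bar PA^{\intercal}+Q-(A\bar PA^{\intercal}+Q)C^{\intercal}\big(C(A\bar PA^{\intercal}+Q)C^{\intercal}+R\big)^{-1}C(A\bar PA^{\intercal}+Q),$$ let $P^{OP}=L(A,Q)$ and $P_n=P^{OP}+\bar P$. Let $0\le\bar\gamma<1$ and $0\le\gamma^e<1$. For $\mu\in(0,1)$: (i) let $(\lambda_k)_{k\ge1}$ be i.i.d. $\{0,1\}$-valued with $\mathbb{P}[\lambda_k=0]=\bar\gamma$, $(\lambda^e_k)_{k\ge1}$ i.i.d. $\{0,1\}$-valued with $\mathbb{P}[\lambda^e_k=0]=\gamma^e$, and $(u_k)_{k\ge1}$ i.i.d. $\{0,1\}$-valued with $\mathbb{P}[u_k=0]=\mu$, with $(u_k)$ independent of $(\lambda_k)$ and of $(\lambda^e_k)$; (ii) with fixed symmetric positive semidefinite $P_0,P^e_0$, define for $k\ge1$: $P_k=\bar P$ if $(\lambda_k,u_k)=(1,1)$ and $P_k=AP_{k-1}A^{\intercal}+Q$ otherwise; and $P^e_k=\bar P$ if $(\lambda^e_k,u_k)=(1,1)$, $P^e_k=P_n$ if $(\lambda^e_k,u_k)=(1,0)$, and $P^e_k=AP^e_{k-1}A^{\intercal}+Q$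 if $\lambda^e_k=0$; (iii) let $J(\mu)=\operatorname{tr}\lim_{k\to\infty}\mathbb{E}[P_k]$ and $J^e(\mu)=\operatorname{tr}\lim_{k\to\infty}\mathbb{E}[P^e_k]$. Let $W^e=L(\sqrt{\gamma^e}A,\bar P)$, $S^e=L(\sqrt{\gamma^e}A,Q)$, $H^e=L(\sqrt{\gamma^e}A,P_n)$ and $$\mu^{OP}=\frac{\gamma^e(\operatorname{tr}S^e-\operatorname{tr}W^e)+\operatorname{tr}W^e-\operatorname{tr}P^{OP}}{(\gamma^e-1)(\operatorname{tr}H^e-\operatorname{tr}W^e)}.$$ If $\mu\in(0,1)$ satisfies $\mu^{OP}<\mu<1$, then $J(\mu)<\operatorname{tr}P^{OP}$ and $\operatorname{tr}P^{OP}<J^e(\mu)$.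
   Context: For a square matrix $T$ with $\rho(T)<1$ and a symmetric matrix $U$, $L(T,U)$ denotes the unique solution $V$ of $V=TVT^{\intercal}+U$, equivalently $L(T,U)=\sum_{j=0}^{\infty}T^jU(T^{\intercal})^j$. Interpretation: a sensor transmits its steady-state Kalman estimate (error covariance $\bar P$) or, with probability $\mu$ (pseudo-random indicator $u_k=0$, known to the legitimate user but not the eavesdropper), independent noise with covariance $\bar P$; $P_k$ is the legitimate user's error covariance (dropout probability $\bar\gamma$), $P^e_k$ the eavesdropper's (dropout probability $\gamma^e$), and $P^{OP}$ the open-loop prediction error covariance. *)

theory Defs
  imports "HOL-Analysis.Analysis" "HOL-Probability.Probability"
begin

type_synonym 'n sqmat = "real^'n^'n"

definition mpow :: "real^'n^'n \<Rightarrow> nat \<Rightarrow> real^'n^'n" where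
  "mpow T j = ((\<lambda>X. T ** X) ^^ j) (mat 1)"

definition cmat :: "real^'n^'m \<Rightarrow> complex^'n^'m" where
  "cmat A = (\<chi> i j. complex_of_real (A $ i $ j))"

definition spectral_radius :: "real^'n^'n \<Rightarrow> real" where
  "spectral_radius A =
     Sup {cmod l | l. \<exists>v::complex^'n. v \<noteq> 0 \<and> cmat A *v v = l *s v}"

definition symmetric_mat :: "real^'n^'n \<Rightarrow> bool" where
  "symmetric_mat P \<longleftrightarrow> transpose P = P"

definition psd :: "real^'n^'n \<Rightarrow> bool" where
  "psd P \<longleftrightarrow> symmetric_mat P \<and> (\<forall>x. 0 \<le> x \<bullet> (P *v x))"

definition pd :: "real^'n^'n \<Rightarrow> bool" where
  "pd P \<longleftrightarrow> symmetric_mat P \<and> (\<forall>x. x \<noteq> 0 \<longrightarrow> 0 < x \<bullet> (P *v x))"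

definition msqrt :: "real^'n^'n \<Rightarrow> real^'n^'n" where
  "msqrt Q = (THE S. psd S \<and> S ** S = Q)"

text \<open>Observability of (A,C): the observability matrix [C; CA; ...; CA^(n-1)]
  has rank n, i.e. trivial kernel.\<close>
definition observable :: "real^'n^'n \<Rightarrow> real^'n^'m \<Rightarrow> bool" where
  "observable A C \<longleftrightarrow>
     (\<forall>x. (\<forall>k < CARD('n). C *v (mpow A k *v x) = 0) \<longrightarrow> x = 0)"

text \<open>Controllability of (A,B): the controllability matrix [B, AB, ..., A^(n-1) B]
  has rank n, i.e. no nonzero left null vector.\<close>
definition controllable :: "real^'n^'n \<Rightarrow> real^'k^'n \<Rightarrow> bool" where
  "controllable A B \<longleftrightarrow>
     (\<forall>y. (\<forall>k < CARD('n). y v* (mpow A k ** B) = 0) \<longrightarrow> y = 0)"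

definition Lyap :: "real^'n^'n \<Rightarrow> real^'n^'n \<Rightarrow> real^'n^'n" where
  "Lyap T U = (\<Sum>j. mpow T j ** U ** transpose (mpow T j))"

definition prior :: "real^'n^'n \<Rightarrow> real^'n^'n \<Rightarrow> real^'n^'n \<Rightarrow> real^'n^'n" where
  "prior A Q P = A ** P ** transpose A + Q"

definition kgain :: "real^'n^'n \<Rightarrow> real^'n^'m \<Rightarrow> real^'n^'n \<Rightarrow> real^'m^'m \<Rightarrow> real^'n^'n \<Rightarrow> real^'m^'n" where
  "kgain A C Q R P = prior A Q P ** transpose C **
      matrix_inv (C ** prior A Q P ** transpose C + R)"

definition riccati :: "real^'n^'n \<Rightarrow> real^'n^'m \<Rightarrow> real^'n^'n \<Rightarrow> real^'m^'m \<Rightarrow> real^'n^'n \<Rightarrow> real^'n^'n" where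
  "riccati A C Q R P = prior A Q P - prior A Q P ** transpose C **
      matrix_inv (C ** prior A Q P ** transpose C + R) ** C ** prior A Q P"

definition stabilizing :: "real^'n^'n \<Rightarrow> real^'n^'m \<Rightarrow> real^'n^'n \<Rightarrow> real^'m^'m \<Rightarrow> real^'n^'n \<Rightarrow> bool" where
  "stabilizing A C Q R P \<longleftrightarrow>
     spectral_radius ((mat 1 - kgain A C Q R P ** C) ** A) < 1"

primrec Pleg :: "real^'n^'n \<Rightarrow> real^'n^'n \<Rightarrow> real^'n^'n \<Rightarrow> real^'n^'n
    \<Rightarrow> (nat \<Rightarrow> 'a \<Rightarrow> nat) \<Rightarrow> (nat \<Rightarrow> 'a \<Rightarrow> nat) \<Rightarrow> nat \<Rightarrow> 'a \<Rightarrow> real^'n^'n" where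
  "Pleg A Q Pbar P0 lam u 0 \<omega> = P0"
| "Pleg A Q Pbar P0 lam u (Suc k) \<omega> =
     (if lam (Suc k) \<omega> = 1 \<and> u (Suc k) \<omega> = 1 then Pbar
      else A ** Pleg A Q Pbar P0 lam u k \<omega> ** transpose A + Q)"

primrec Peav :: "real^'n^'n \<Rightarrow> real^'n^'n \<Rightarrow> real^'n^'n \<Rightarrow> real^'n^'n \<Rightarrow> real^'n^'n
    \<Rightarrow> (nat \<Rightarrow> 'a \<Rightarrow> nat) \<Rightarrow> (nat \<Rightarrow> 'a \<Rightarrow> nat) \<Rightarrow> nat \<Rightarrow> 'a \<Rightarrow> real^'n^'n" where
  "Peav A Q Pbar Pn Pe0 lame u 0 \<omega> = Pe0"
| "Peav A Q Pbar Pn Pe0 lame u (Suc k) \<omega> =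
     (if lame (Suc k) \<omega> = 1 \<and> u (Suc k) \<omega> = 1 then Pbar
      else if lame (Suc k) \<omega> = 1 \<and> u (Suc k) \<omega> = 0 then Pn
      else A ** Peav A Q Pbar Pn Pe0 lame u k \<omega> ** transpose A + Q)"

end

(*
  Both expected covariances follow randomly reset recursions. The switch at time k+1 is
  independent of the past, so the expectations obey the affine recursion
    E(k+1) = p V + p' V' + c (A E(k) A^T + Q),   c = 1 - p - p' = P(no reset),
  and therefore converge to the Lyapunov sum L(sqrt c A, p V + p' V' + c Q) as soon as the
  powers of A decay geometrically, which rho(A) < 1 guarantees via the Jordan normal form.

  For the legitimate user, c = 1 - p with p = (1 - gbar)(1 - mu) and V = Pbar. The Riccati
  fixed point satisfies Pbar = A Pbar A^T + Q - G with G positive semidefinite of positive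
  trace, hence P^OP - Pbar = L(A, G); the limit minus P^OP then equals -p L(sqrt c A, L(A, G)),
  whose trace is negative. For the eavesdropper c = ge, and the trace of the limit is affine
  in mu with slope (1 - ge) tr L(sqrt ge A, P^OP) > 0; the condition mu > mu^OP says exactly
  that it exceeds tr P^OP.
*)
theory Submission
  imports Defs "Jordan_Normal_Form.Spectral_Radius"
begin

hide_const (open) Matrix.mat Spectral_Radius.spectral_radius
no_notation Matrix.vec_index (infixl "$" 100)
no_notation Matrix.scalar_prod (infix "\<bullet>" 70)

lemma matrix_add_rdistrib: "((B::'a::semiring_1^'k^'m) + C) ** A = B ** A + C ** A"
  by (simp add: matrix_matrix_mult_def Finite_Cartesian_Product.vec_eq_iff sum.distrib distrib_right)

lemma transpose_add: "transpose ((X::'a::semiring_1^'n^'m) + Y) = transpose X + transpose Y"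
  by (simp add: transpose_def Finite_Cartesian_Product.vec_eq_iff)

lemma bounded_bilinear_matrix_mult:
  "bounded_bilinear ((**) :: real^'k^'m \<Rightarrow> real^'n^'k \<Rightarrow> real^'n^'m)"
  unfolding bilinear_conv_bounded_bilinear[symmetric] bilinear_def
  by (auto intro!: linearI simp: matrix_add_ldistrib matrix_add_rdistrib
      matrix_scalar_ac scalar_matrix_assoc)

lemma bounded_linear_transpose: "bounded_linear (transpose :: real^'n^'m \<Rightarrow> real^'m^'n)"
  unfolding linear_conv_bounded_linear[symmetric]
  by (intro linearI) (simp_all add: transpose_add transpose_scalar)

lemma norm_vec_le_sum_norm: "norm (x::'a::real_normed_vector^'n) \<le> (\<Sum>i\<in>UNIV. norm (x$i))"
  by (simp add: norm_vec_def L2_set_le_sum)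

lemma norm_le_sum_abs_entries: "norm (X::real^'n^'m) \<le> (\<Sum>i\<in>UNIV. \<Sum>j\<in>UNIV. \<bar>X$i$j\<bar>)"
proof -
  have "norm X \<le> (\<Sum>i\<in>UNIV. norm (X$i))"
    by (rule norm_vec_le_sum_norm)
  also have "\<dots> \<le> (\<Sum>i\<in>UNIV. \<Sum>j\<in>UNIV. \<bar>X$i$j\<bar>)"
    by (intro sum_mono norm_le_l1_cart)
  finally show ?thesis .
qed

definition sandwich :: "real^'n^'m \<Rightarrow> real^'n^'n \<Rightarrow> real^'m^'m" where
  "sandwich T X = T ** X ** transpose T"

lemma bounded_linear_sandwich: "bounded_linear (sandwich T)"
  unfolding sandwich_def
  using bounded_linear_compose[OF bounded_bilinear.bounded_linear_left[OF bounded_bilinear_matrix_mult]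
      bounded_bilinear.bounded_linear_right[OF bounded_bilinear_matrix_mult], of T "transpose T"]
  by (simp add: o_def)

lemma sandwich_norm_bound:
  obtains K where "K > 0" "\<And>T X. norm (sandwich (T::real^'n^'m) X) \<le> K * (norm T)\<^sup>2 * norm X"
proof -
  obtain K1 where "K1 > 0" and K1: "\<And>S X. norm ((S::real^'n^'m) ** (X::real^'n^'n)) \<le> norm S * norm X * K1"
    using bounded_bilinear.pos_bounded[OF bounded_bilinear_matrix_mult] by blast
  obtain K2 where "K2 > 0" and K2: "\<And>Y T. norm ((Y::real^'n^'m) ** (T::real^'m^'n)) \<le> norm Y * norm T * K2"
    using bounded_bilinear.pos_bounded[OF bounded_bilinear_matrix_mult] by blast
  obtain K3 where "K3 > 0" and K3: "\<And>T. norm (transpose (T::real^'n^'m)) \<le> norm T * K3"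
    using bounded_linear.pos_bounded[OF bounded_linear_transpose] by blast
  have "norm (sandwich T X) \<le> (K1 * K2 * K3) * (norm T)\<^sup>2 * norm X" for T :: "real^'n^'m" and X
  proof -
    have "norm (sandwich T X) \<le> norm (T ** X) * norm (transpose T) * K2"
      unfolding sandwich_def by (rule K2)
    also have "\<dots> \<le> (norm T * norm X * K1) * (norm T * K3) * K2"
      using \<open>K1 > 0\<close> \<open>K2 > 0\<close> by (intro mult_right_mono mult_mono K1 K3) auto
    finally show ?thesis by (simp add: power2_eq_square mult_ac)
  qed
  moreover have "K1 * K2 * K3 > 0"
    using \<open>K1 > 0\<close> \<open>K2 > 0\<close> \<open>K3 > 0\<close> by simp
  ultimately show ?thesis using that by blast
qed

lemma sandwich_add: "sandwich T (X + Y) = sandwich T X + sandwich T Y"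
  by (rule linear_add[OF bounded_linear.linear[OF bounded_linear_sandwich]])

lemma sandwich_diff: "sandwich T (X - Y) = sandwich T X - sandwich T Y"
  by (rule linear_diff[OF bounded_linear.linear[OF bounded_linear_sandwich]])

lemma sandwich_scaleR: "sandwich T (c *\<^sub>R X) = c *\<^sub>R sandwich T X"
  by (rule linear_scale[OF bounded_linear.linear[OF bounded_linear_sandwich]])

lemma sandwich_sum: "sandwich T (\<Sum>j\<in>J. f j) = (\<Sum>j\<in>J. sandwich T (f j))"
  by (rule linear_sum[OF bounded_linear.linear[OF bounded_linear_sandwich]])

lemma sandwich_sandwich: "sandwich S (sandwich T X) = sandwich (S ** T) X"
  by (simp add: sandwich_def matrix_transpose_mul matrix_mul_assoc)

lemma sandwich_mat_one [simp]: "sandwich (mat 1) X = X"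
  by (simp add: sandwich_def)

lemma sandwich_scaleR_left: "sandwich (c *\<^sub>R T) X = c\<^sup>2 *\<^sub>R sandwich T X"
  by (simp add: sandwich_def transpose_scalar matrix_scalar_ac scalar_matrix_assoc power2_eq_square)

lemma prior_eq_sandwich: "prior A Q P = sandwich A P + Q"
  by (simp add: prior_def sandwich_def)

section \<open>Exponentially stable matrices\<close>

lemma mpow_0 [simp]: "mpow T 0 = mat 1"
  by (simp add: mpow_def)

lemma mpow_Suc: "mpow T (Suc k) = T ** mpow T k"
  by (simp add: mpow_def)

lemma mpow_Suc_right: "mpow T (Suc k) = mpow T k ** T"
  by (induction k) (simp_all add: mpow_Suc matrix_mul_assoc)

lemma mpow_scaleR: "mpow (c *\<^sub>R T) k = c ^ k *\<^sub>R mpow T k"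
  by (induction k) (simp_all add: mpow_Suc matrix_scalar_ac scalar_matrix_assoc mult.commute)

definition exp_stable :: "real^'n^'n \<Rightarrow> bool" where
  "exp_stable T \<longleftrightarrow> (\<exists>K r. 0 < r \<and> r < 1 \<and> (\<forall>k. norm (mpow T k) \<le> K * r ^ k))"

lemma exp_stable_scaleR:
  assumes "exp_stable T" "\<bar>c\<bar> \<le> 1"
  shows "exp_stable (c *\<^sub>R T)"
proof -
  obtain K r where r: "0 < r" "r < 1" and bound: "\<And>k. norm (mpow T k) \<le> K * r ^ k"
    using assms(1) unfolding exp_stable_def by blast
  have "norm (mpow (c *\<^sub>R T) k) \<le> K * r ^ k" for k
  proof -
    have "norm (mpow (c *\<^sub>R T) k) = \<bar>c\<bar> ^ k * norm (mpow T k)"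
      by (simp add: mpow_scaleR power_abs)
    also have "\<dots> \<le> norm (mpow T k)"
      using assms(2) by (simp add: mult_left_le_one_le power_le_one)
    finally show ?thesis using bound[of k] by simp
  qed
  then show ?thesis unfolding exp_stable_def using r by blast
qed

definition to_jnf :: "'a^'n^'n \<Rightarrow> 'a mat" where
  "to_jnf X = Matrix.mat CARD('n) CARD('n)
     (\<lambda>(i, j). X $ from_nat_into UNIV i $ from_nat_into UNIV j)"

lemma bij_betw_from_nat_into_UNIV:
  "bij_betw (from_nat_into (UNIV :: 'n::finite set)) {..<CARD('n)} UNIV"
  using bij_betw_from_nat_into_finite[of "UNIV :: 'n set"] by simp

lemma to_nat_on_UNIV_less: "to_nat_on (UNIV :: 'n::finite set) i < CARD('n)"
  using to_nat_on_finite[of "UNIV :: 'n set"] by (auto simp: bij_betw_def)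

lemma from_nat_into_to_nat_on_UNIV [simp]:
  "from_nat_into UNIV (to_nat_on UNIV (i::'n::finite)) = i"
  by (simp add: countable_finite)

lemma to_nat_on_from_nat_into_UNIV [simp]:
  "l < CARD('n) \<Longrightarrow> to_nat_on UNIV (from_nat_into UNIV l :: 'n::finite) = l"
  using to_nat_on_finite[of "UNIV :: 'n set"] by (simp add: bij_betw_def)

lemma sum_from_nat_into_UNIV:
  "(\<Sum>l<CARD('n). g (from_nat_into UNIV l :: 'n::finite)) = sum g UNIV"
  using sum.reindex_bij_betw[OF bij_betw_from_nat_into_UNIV, of g] by simp

lemma dim_to_jnf [simp]:
  "dim_row (to_jnf (X::'a^'n^'n)) = CARD('n)" "dim_col (to_jnf X) = CARD('n)"
  by (simp_all add: to_jnf_def)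

lemma to_jnf_carrier: "to_jnf (X::'a^'n^'n) \<in> carrier_mat CARD('n) CARD('n)"
  by (simp add: to_jnf_def)

lemma to_jnf_mult: "to_jnf ((X::'a::comm_semiring_1^'n^'n) ** Y) = to_jnf X * to_jnf Y"
proof (rule eq_matI)
  fix i j assume "i < dim_row (to_jnf X * to_jnf Y)" "j < dim_col (to_jnf X * to_jnf Y)"
  then have "i < CARD('n)" "j < CARD('n)" by (auto simp: to_jnf_def)
  then show "to_jnf (X ** Y) $$ (i, j) = (to_jnf X * to_jnf Y) $$ (i, j)"
    by (simp add: to_jnf_def matrix_matrix_mult_def scalar_prod_def atLeast0LessThan
        sum_from_nat_into_UNIV[where g = "\<lambda>l. X $ _ $ l * Y $ l $ _"])
qed (auto simp: to_jnf_def)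

lemma to_jnf_mat_one: "to_jnf (mat 1 :: 'a::comm_semiring_1^'n^'n) = 1\<^sub>m CARD('n)"
proof (rule eq_matI)
  fix i j assume "i < dim_row (1\<^sub>m CARD('n) :: 'a mat)" "j < dim_col (1\<^sub>m CARD('n) :: 'a mat)"
  then have "i < CARD('n)" "j < CARD('n)" by auto
  moreover from this have "(from_nat_into UNIV i = (from_nat_into UNIV j :: 'n)) = (i = j)"
    by (metis to_nat_on_from_nat_into_UNIV)
  ultimately show "to_jnf (mat 1 :: 'a^'n^'n) $$ (i, j) = 1\<^sub>m CARD('n) $$ (i, j)"
    by (simp add: to_jnf_def Finite_Cartesian_Product.mat_def)
qed (auto simp: to_jnf_def)

lemma cmat_mult: "cmat (A ** B) = cmat A ** cmat B"
  by (simp add: cmat_def matrix_matrix_mult_def Finite_Cartesian_Product.vec_eq_iff)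

lemma cmat_mat_one: "cmat (mat 1) = mat 1"
  by (simp add: cmat_def Finite_Cartesian_Product.mat_def Finite_Cartesian_Product.vec_eq_iff)

lemma cmat_scaleR: "cmat (c *\<^sub>R A) = c *\<^sub>R cmat A"
  by (simp add: cmat_def Finite_Cartesian_Product.vec_eq_iff) (simp add: scaleR_conv_of_real)

lemma to_jnf_cmat_mpow: "to_jnf (cmat (mpow B k)) = to_jnf (cmat B) ^\<^sub>m k"
  by (induction k) (simp_all add: cmat_mat_one to_jnf_mat_one mpow_Suc_right cmat_mult to_jnf_mult)

lemma eigenvector_if_jnf_eigenvalue:
  assumes "eigenvalue (to_jnf (X::'a::comm_ring_1^'n^'n)) \<mu>"
  obtains v where "v \<noteq> 0" "X *v v = \<mu> *s v"
proof -
  obtain w where w: "w \<in> carrier_vec CARD('n)" "w \<noteq> 0\<^sub>v CARD('n)"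
    and eigen: "to_jnf X *\<^sub>v w = \<mu> \<cdot>\<^sub>v w"
    using assms unfolding eigenvalue_def eigenvector_def by (auto simp: to_jnf_def)
  define v :: "'a^'n" where "v = (\<chi> i. vec_index w (to_nat_on UNIV i))"
  have v_from_nat: "v $ from_nat_into UNIV l = vec_index w l" if "l < CARD('n)" for l
    using that by (simp add: v_def)
  have "v \<noteq> 0"
  proof
    assume "v = 0"
    then have "w = 0\<^sub>v CARD('n)"
      using w(1) v_from_nat by (intro eq_vecI) (auto simp: Finite_Cartesian_Product.vec_eq_iff)
    with w(2) show False ..
  qed
  moreover have "X *v v = \<mu> *s v"
  proof (rule iffD2[OF Finite_Cartesian_Product.vec_eq_iff], rule allI)
    fix i :: 'n
    have "vec_index (to_jnf X *\<^sub>v w) (to_nat_on UNIV i) = \<mu> * vec_index w (to_nat_on UNIV i)"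
      using w(1) to_nat_on_UNIV_less[of i] by (simp add: eigen)
    then have "(\<Sum>l<CARD('n). X $ i $ from_nat_into UNIV l * v $ from_nat_into UNIV l) = \<mu> * v $ i"
      using w(1) to_nat_on_UNIV_less[of i]
      by (simp add: to_jnf_def scalar_prod_def atLeast0LessThan v_from_nat v_def)
    then show "(X *v v) $ i = (\<mu> *s v) $ i"
      by (simp add: matrix_vector_mult_def sum_from_nat_into_UNIV[where g = "\<lambda>j. X $ i $ j * v $ j"])
  qed
  ultimately show ?thesis using that by blast
qed

lemma norm_vector_scalar_mult: "norm (c *s (x::'a::real_normed_field^'n)) = norm c * norm x"
  by (simp add: norm_vec_def norm_mult L2_set_right_distrib)

lemma norm_matrix_vector_mult_le:
  "norm ((M::'a::real_normed_field^'n^'m) *v x) \<le> (\<Sum>i\<in>UNIV. \<Sum>j\<in>UNIV. norm (M$i$j)) * norm x"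
proof -
  have "norm (M *v x) \<le> (\<Sum>i\<in>UNIV. norm ((M *v x) $ i))"
    by (rule norm_vec_le_sum_norm)
  also have "\<dots> \<le> (\<Sum>i\<in>UNIV. \<Sum>j\<in>UNIV. norm (M$i$j) * norm x)"
    unfolding matrix_vector_mult_def
    by (auto intro!: sum_mono order_trans[OF norm_sum] mult_left_mono Finite_Cartesian_Product.norm_nth_le
        simp: norm_mult)
  finally show ?thesis by (simp add: sum_distrib_right)
qed

lemma eigenvalue_norm_le_spectral_radius:
  assumes "v \<noteq> 0" and eigen: "cmat A *v v = l *s v"
  shows "cmod l \<le> spectral_radius A"
  unfolding Defs.spectral_radius_def
proof (rule cSup_upper)
  define c where "c = (\<Sum>i\<in>UNIV. \<Sum>j\<in>UNIV. cmod (cmat A $ i $ j))"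
  have "cmod l' \<le> c" if "w \<noteq> 0" "cmat A *v w = l' *s w" for l' w
  proof -
    have "cmod l' * norm w \<le> c * norm w"
      using norm_matrix_vector_mult_le[of "cmat A" w] that(2)
      by (simp add: c_def norm_vector_scalar_mult)
    then show ?thesis using that(1) by simp
  qed
  then show "bdd_above {cmod l |l. \<exists>v. v \<noteq> 0 \<and> cmat A *v v = l *s v}"
    by (intro bdd_aboveI[where M = c]) blast
qed (use assms in blast)

lemma jnf_spectral_radius_scaled_less_1:
  assumes "spectral_radius A < r" "0 < r"
  shows "Spectral_Radius.spectral_radius (to_jnf (cmat ((1/r) *\<^sub>R A))) < 1"
proof -
  obtain \<mu> where eigen: "eigenvalue (to_jnf (cmat ((1/r) *\<^sub>R A))) \<mu>"
    and radius: "Spectral_Radius.spectral_radius (to_jnf (cmat ((1/r) *\<^sub>R A))) = cmod \<mu>"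
    using spectral_radius_mem_max(1)[OF to_jnf_carrier] by (auto simp: spectrum_def)
  obtain v where "v \<noteq> 0" and v: "cmat ((1/r) *\<^sub>R A) *v v = \<mu> *s v"
    using eigen by (rule eigenvector_if_jnf_eigenvalue)
  have "cmat A *v v = r *\<^sub>R (cmat ((1/r) *\<^sub>R A) *v v)"
    using assms(2)
    by (simp add: cmat_scaleR Finite_Cartesian_Product.vec_eq_iff matrix_vector_mult_def scaleR_sum_right)
  also have "\<dots> = (complex_of_real r * \<mu>) *s v"
    unfolding v by (simp add: Finite_Cartesian_Product.vec_eq_iff) (simp add: scaleR_conv_of_real)
  finally have "cmod (complex_of_real r * \<mu>) \<le> spectral_radius A"
    by (rule eigenvalue_norm_le_spectral_radius[OF \<open>v \<noteq> 0\<close>])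
  then have "r * cmod \<mu> \<le> spectral_radius A"
    using assms(2) by (simp add: norm_mult)
  then have "r * cmod \<mu> < r * 1" using assms(1) by simp
  then show ?thesis using radius assms(2) by (simp only: mult_less_cancel_left_pos)
qed

text \<open>Rescaling by some \<open>r\<close> between the spectral radius and 1, the Jordan normal form bounds
  all powers of \<open>A / r\<close> uniformly.\<close>

lemma exp_stable_if_spectral_radius_less_1:
  fixes A :: "real^'n^'n"
  assumes "spectral_radius A < 1"
  shows "exp_stable A"
proof -
  define r where "r = (max 0 (spectral_radius A) + 1) / 2"
  have r: "0 < r" "r < 1" "spectral_radius A < r"
    using assms unfolding r_def by auto
  define B where "B = (1/r) *\<^sub>R A"
  obtain c where c: "\<And>k. norm_bound (to_jnf (cmat B) ^\<^sub>m k) c"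
    using spectral_radius_jnf_norm_bound_less_1_upper_triangular[OF to_jnf_carrier
        jnf_spectral_radius_scaled_less_1[OF r(3,1)]]
    unfolding B_def by blast
  have entry: "\<bar>mpow B k $ i $ j\<bar> \<le> c" for k i j
    using c[of k, unfolded to_jnf_cmat_mpow[symmetric], unfolded norm_bound_def,
        rule_format, of "to_nat_on UNIV i" "to_nat_on UNIV j"]
    by (simp add: to_jnf_def to_nat_on_UNIV_less cmat_def)
  have "norm (mpow A k) \<le> (CARD('n) * CARD('n) * c) * r ^ k" for k
  proof -
    have "norm (mpow B k) \<le> (\<Sum>i\<in>(UNIV::'n set). \<Sum>j\<in>(UNIV::'n set). c)"
      by (rule order_trans[OF norm_le_sum_abs_entries]) (intro sum_mono entry)
    moreover have "norm (mpow A k) = r ^ k * norm (mpow B k)"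
      using r(1) by (simp add: B_def mpow_scaleR power_one_over)
    ultimately show ?thesis
      using r(1) by (simp add: mult_left_mono mult_ac)
  qed
  then show ?thesis unfolding exp_stable_def using r(1,2) by blast
qed

section \<open>Lyapunov sums\<close>

lemma Lyap_eq_suminf_sandwich: "Lyap T U = (\<Sum>j. sandwich (mpow T j) U)"
  by (simp add: Lyap_def sandwich_def)

lemma summable_sandwich_mpow:
  fixes T :: "real^'n^'n"
  assumes "exp_stable T"
  shows "summable (\<lambda>j. sandwich (mpow T j) U)"
proof -
  obtain K r where r: "0 < r" "r < 1" and bound: "\<And>k. norm (mpow T k) \<le> K * r ^ k"
    using assms unfolding exp_stable_def by blast
  obtain K' where "K' > 0" and K': "\<And>S X. norm (sandwich (S::real^'n^'n) X) \<le> K' * (norm S)\<^sup>2 * norm X"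
    using sandwich_norm_bound by blast
  have "norm (sandwich (mpow T j) U) \<le> (K' * K\<^sup>2 * norm U) * (r\<^sup>2) ^ j" for j
  proof -
    have "(norm (mpow T j))\<^sup>2 \<le> (K * r ^ j)\<^sup>2"
      by (rule power_mono[OF bound]) simp
    then have "K' * (norm (mpow T j))\<^sup>2 * norm U \<le> K' * (K * r ^ j)\<^sup>2 * norm U"
      using \<open>K' > 0\<close> by (intro mult_right_mono mult_left_mono) auto
    with K'[of "mpow T j" U] show ?thesis
      by (simp add: power_mult_distrib power_mult[symmetric] mult.commute mult.left_commute)
  qed
  moreover have "summable (\<lambda>j. (K' * K\<^sup>2 * norm U) * (r\<^sup>2) ^ j)"
    using r by (intro summable_mult summable_geometric) (simp add: abs_square_less_1)
  ultimately show ?thesis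
    by (rule summable_comparison_test'[rotated])
qed

lemma sandwich_Lyap:
  assumes "exp_stable T"
  shows "sandwich T (Lyap T U) = Lyap T U - U"
proof -
  note summable = summable_sandwich_mpow[OF assms, of U]
  have "sandwich T (Lyap T U) = (\<Sum>j. sandwich T (sandwich (mpow T j) U))"
    unfolding Lyap_eq_suminf_sandwich
    by (rule bounded_linear.suminf[OF bounded_linear_sandwich summable])
  also have "\<dots> = (\<Sum>j. sandwich (mpow T (Suc j)) U)"
    by (simp add: sandwich_sandwich mpow_Suc)
  also have "\<dots> = Lyap T U - U"
    unfolding Lyap_eq_suminf_sandwich by (simp add: suminf_split_head[OF summable])
  finally show ?thesis .
qed

lemma Lyap_iterates_tendsto:
  assumes "exp_stable T" and step: "\<And>k. E (Suc k) = sandwich T (E k) + U"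
  shows "E \<longlonglongrightarrow> Lyap T U"
proof -
  have closed_form: "E k = sandwich (mpow T k) (E 0) + (\<Sum>j<k. sandwich (mpow T j) U)" for k
  proof (induction k)
    case (Suc k)
    have "E (Suc k) = sandwich (mpow T (Suc k)) (E 0) + ((\<Sum>j<k. sandwich (mpow T (Suc j)) U) + U)"
      by (simp add: step Suc.IH sandwich_add sandwich_sum sandwich_sandwich mpow_Suc add.assoc)
    also have "(\<Sum>j<k. sandwich (mpow T (Suc j)) U) + U = (\<Sum>j<Suc k. sandwich (mpow T j) U)"
      unfolding sum.lessThan_Suc_shift by simp
    finally show ?case .
  qed simp
  have "(\<lambda>k. sandwich (mpow T k) (E 0) + (\<Sum>j<k. sandwich (mpow T j) U)) \<longlonglongrightarrow> 0 + Lyap T U"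
    unfolding Lyap_eq_suminf_sandwich
    by (intro tendsto_add summable_LIMSEQ_zero summable_LIMSEQ summable_sandwich_mpow assms(1))
  also have "(\<lambda>k. sandwich (mpow T k) (E 0) + (\<Sum>j<k. sandwich (mpow T j) U)) = E"
    by (rule ext) (rule closed_form[symmetric])
  finally show ?thesis by simp
qed

lemma Lyap_unique:
  assumes "exp_stable T" "X = sandwich T X + U"
  shows "X = Lyap T U"
proof -
  have "(\<lambda>_. X) \<longlonglongrightarrow> Lyap T U"
    by (rule Lyap_iterates_tendsto[OF assms(1)]) (rule assms(2))
  then show ?thesis by (simp add: LIMSEQ_const_iff)
qed

lemma Lyap_add:
  assumes "exp_stable T"
  shows "Lyap T (U + V) = Lyap T U + Lyap T V"
  unfolding Lyap_eq_suminf_sandwich sandwich_add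
  by (intro suminf_add[symmetric] summable_sandwich_mpow assms)

lemma Lyap_scaleR:
  assumes "exp_stable T"
  shows "Lyap T (c *\<^sub>R U) = c *\<^sub>R Lyap T U"
  unfolding Lyap_eq_suminf_sandwich sandwich_scaleR
  by (rule suminf_scaleR_right[OF summable_sandwich_mpow[OF assms], symmetric])

text \<open>Semidefiniteness of the quadratic form only: Lyapunov sums and the Riccati gap are handled
  without tracking symmetry.\<close>

definition qf_nonneg :: "real^'n^'n \<Rightarrow> bool" where
  "qf_nonneg X \<longleftrightarrow> (\<forall>x. 0 \<le> x \<bullet> (X *v x))"

definition qf_pos :: "real^'n^'n \<Rightarrow> bool" where
  "qf_pos X \<longleftrightarrow> (\<forall>x. x \<noteq> 0 \<longrightarrow> 0 < x \<bullet> (X *v x))"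

lemma pd_iff_symmetric_qf_pos: "pd P \<longleftrightarrow> symmetric_mat P \<and> qf_pos P"
  by (simp add: pd_def qf_pos_def)

lemma qf_pos_imp_qf_nonneg: "qf_pos X \<Longrightarrow> qf_nonneg X"
  unfolding qf_pos_def qf_nonneg_def by (metis inner_zero_left order_refl less_imp_le)

lemma qf_pos_add_qf_nonneg: "qf_nonneg X \<Longrightarrow> qf_pos Y \<Longrightarrow> qf_pos (X + Y)"
  unfolding qf_pos_def qf_nonneg_def
  by (simp add: matrix_vector_mult_add_rdistrib inner_add_right add_nonneg_pos)

lemma inner_sandwich: "x \<bullet> (sandwich T X *v x) = (transpose T *v x) \<bullet> (X *v (transpose T *v x))"
  by (simp add: sandwich_def matrix_vector_mul_assoc[symmetric] dot_lmul_matrix[symmetric])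

lemma qf_nonneg_sandwich: "qf_nonneg X \<Longrightarrow> qf_nonneg (sandwich T X)"
  unfolding qf_nonneg_def by (simp add: inner_sandwich)

lemma bounded_linear_quadratic_form: "bounded_linear (\<lambda>X::real^'n^'n. x \<bullet> (X *v x))"
  unfolding linear_conv_bounded_linear[symmetric]
  by (intro linearI) (simp_all add: matrix_vector_mult_add_rdistrib inner_add_right
      scaleR_matrix_vector_assoc[symmetric])

lemma qf_nonneg_Lyap:
  fixes T :: "real^'n^'n"
  assumes "exp_stable T" "qf_nonneg U"
  shows "qf_nonneg (Lyap T U)"
  unfolding qf_nonneg_def
proof
  fix x :: "real^'n"
  note summable = summable_sandwich_mpow[OF assms(1), of U]
  have "x \<bullet> (Lyap T U *v x) = (\<Sum>j. x \<bullet> (sandwich (mpow T j) U *v x))"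
    unfolding Lyap_eq_suminf_sandwich
    by (rule bounded_linear.suminf[OF bounded_linear_quadratic_form summable])
  also have "\<dots> \<ge> 0"
    using qf_nonneg_sandwich[OF assms(2)] unfolding qf_nonneg_def
    by (intro suminf_nonneg bounded_linear.summable[OF bounded_linear_quadratic_form summable]) auto
  finally show "0 \<le> x \<bullet> (Lyap T U *v x)" .
qed

lemma trace_scaleR: "trace (c *\<^sub>R X) = c * trace (X::real^'n^'n)"
  by (simp add: trace_def sum_distrib_left)

lemma bounded_linear_trace: "bounded_linear (trace :: real^'n^'n \<Rightarrow> real)"
  unfolding linear_conv_bounded_linear[symmetric]
  by (intro linearI) (simp_all add: trace_add trace_scaleR)

lemma trace_eq_sum_quadratic_form: "trace (X::real^'n^'n) = (\<Sum>i\<in>UNIV. axis i 1 \<bullet> (X *v axis i 1))"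
  by (simp add: trace_def matrix_vector_mult_basis inner_axis' column_def)

lemma trace_nonneg: "qf_nonneg X \<Longrightarrow> 0 \<le> trace X"
  unfolding trace_eq_sum_quadratic_form qf_nonneg_def by (intro sum_nonneg) auto

lemma trace_pos: "qf_pos X \<Longrightarrow> 0 < trace X"
  unfolding trace_eq_sum_quadratic_form qf_pos_def by (intro sum_pos) auto

lemma trace_le_trace_Lyap:
  assumes "exp_stable T" "qf_nonneg U"
  shows "trace U \<le> trace (Lyap T U)"
proof -
  note summable = summable_sandwich_mpow[OF assms(1), of U]
  have "trace U = (\<Sum>j\<in>{0}. trace (sandwich (mpow T j) U))"
    by simp
  also have "\<dots> \<le> (\<Sum>j. trace (sandwich (mpow T j) U))"
    using trace_nonneg[OF qf_nonneg_sandwich[OF assms(2)]]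
    by (intro sum_le_suminf bounded_linear.summable[OF bounded_linear_trace summable]) auto
  also have "\<dots> = trace (Lyap T U)"
    unfolding Lyap_eq_suminf_sandwich
    by (rule bounded_linear.suminf[OF bounded_linear_trace summable, symmetric])
  finally show ?thesis .
qed

lemma pd_imp_psd: "pd P \<Longrightarrow> psd P"
  unfolding pd_def psd_def by (metis inner_zero_left order_refl less_imp_le)

lemma psd_iff_symmetric_qf_nonneg: "psd P \<longleftrightarrow> symmetric_mat P \<and> qf_nonneg P"
  by (simp add: psd_def qf_nonneg_def)

lemma axis_vector_matrix_mult: "axis i 1 v* (M::real^'n^'m) = M $ i"
  by (simp add: Finite_Cartesian_Product.vec_eq_iff vector_matrix_mult_def axis_def
      if_distrib if_distribR cong: if_cong)

lemma trace_sandwich_pos: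
  assumes "qf_pos S" "M \<noteq> 0"
  shows "0 < trace (sandwich M S)"
proof -
  obtain i where "M $ i \<noteq> 0"
    using \<open>M \<noteq> 0\<close> by (auto simp: Finite_Cartesian_Product.vec_eq_iff)
  have "trace (sandwich M S) = (\<Sum>j\<in>UNIV. (M $ j) \<bullet> (S *v (M $ j)))"
    by (simp add: trace_eq_sum_quadratic_form inner_sandwich axis_vector_matrix_mult)
  also have "\<dots> > 0"
    using assms(1) \<open>M $ i \<noteq> 0\<close> qf_pos_imp_qf_nonneg[OF assms(1)]
    unfolding qf_pos_def qf_nonneg_def by (intro sum_pos2[of _ i]) auto
  finally show ?thesis .
qed

section \<open>The steady-state Riccati gap\<close>

lemma matrix_inv_right: "invertible K \<Longrightarrow> K ** matrix_inv K = mat 1"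
  unfolding invertible_def matrix_inv_def by (rule someI2_ex) auto

lemma qf_pos_imp_invertible:
  assumes "qf_pos K"
  shows "invertible K"
proof -
  have "x = 0" if "K *v x = 0" for x
    using assms that unfolding qf_pos_def by (metis inner_zero_right less_irrefl)
  then show ?thesis
    unfolding invertible_left_inverse matrix_left_invertible_ker by blast
qed

lemma qf_pos_matrix_inv:
  fixes K :: "real^'n^'n"
  assumes "qf_pos K"
  shows "qf_pos (matrix_inv K)"
  unfolding qf_pos_def
proof (intro allI impI)
  fix y :: "real^'n" assume "y \<noteq> 0"
  define z where "z = matrix_inv K *v y"
  have Kz: "K *v z = y"
    unfolding z_def matrix_vector_mul_assoc matrix_inv_right[OF qf_pos_imp_invertible[OF assms]]
    by simp
  have "z \<noteq> 0"
  proof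
    assume "z = 0"
    with Kz have "y = 0" by simp
    with \<open>y \<noteq> 0\<close> show False ..
  qed
  with assms have "0 < z \<bullet> y"
    unfolding qf_pos_def Kz[symmetric] by blast
  then show "0 < y \<bullet> (matrix_inv K *v y)"
    unfolding z_def by (simp only: inner_commute)
qed

lemma observable_imp_nonzero:
  assumes "observable A (C::real^'n^'m)"
  shows "C \<noteq> 0"
proof
  assume "C = 0"
  have "axis undefined (1::real) = (0::real^'n)"
    by (rule assms[unfolded observable_def, rule_format]) (simp add: \<open>C = 0\<close>)
  then show False by simp
qed

lemma Lyap_diff_eq_Lyap_prior_diff:
  assumes "exp_stable A"
  shows "Lyap A Q - P = Lyap A (prior A Q P - P)"
proof (rule Lyap_unique[OF assms])
  show "Lyap A Q - P = sandwich A (Lyap A Q - P) + (prior A Q P - P)"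
    by (simp add: sandwich_diff prior_eq_sandwich sandwich_Lyap[OF assms])
qed

lemma riccati_fixpoint_gap:
  fixes A Q P :: "real^'n^'n" and C :: "real^'n^'m" and R :: "real^'m^'m"
  assumes "pd Q" "pd R" "psd P" "C \<noteq> 0" and fixpoint: "P = riccati A C Q R P"
  shows "qf_nonneg (prior A Q P - P)" "0 < trace (prior A Q P - P)"
proof -
  define F where "F = prior A Q P"
  define S where "S = matrix_inv (C ** F ** transpose C + R)"
  have "transpose F = F"
    using assms(1,3) unfolding F_def prior_def pd_def psd_def symmetric_mat_def
    by (simp add: transpose_add matrix_transpose_mul matrix_mul_assoc)
  have F_pos: "qf_pos F"
    using assms(1,3) unfolding F_def prior_eq_sandwich pd_iff_symmetric_qf_pos psd_iff_symmetric_qf_nonneg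
    by (intro qf_pos_add_qf_nonneg qf_nonneg_sandwich) auto
  have S_pos: "qf_pos S"
    using assms(2) F_pos unfolding S_def pd_iff_symmetric_qf_pos sandwich_def[symmetric]
    by (intro qf_pos_matrix_inv qf_pos_add_qf_nonneg qf_nonneg_sandwich qf_pos_imp_qf_nonneg) auto
  have "P = F - F ** transpose C ** S ** C ** F"
    using fixpoint unfolding riccati_def F_def[symmetric] S_def[symmetric] .
  then have gap: "F - P = sandwich (F ** transpose C) S"
    using \<open>transpose F = F\<close> by (simp add: sandwich_def matrix_transpose_mul matrix_mul_assoc)
  have "F ** transpose C \<noteq> 0"
  proof
    assume "F ** transpose C = 0"
    have "F *v (C $ a) = (F ** transpose C) *v axis a 1" for a
      by (simp add: matrix_vector_mul_assoc[symmetric] axis_vector_matrix_mult)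
    then have "F *v (C $ a) = 0" for a
      using \<open>F ** transpose C = 0\<close> by simp
    then have "C $ a = 0" for a
      using F_pos unfolding qf_pos_def by (metis inner_zero_right less_irrefl)
    with \<open>C \<noteq> 0\<close> show False by (simp add: Finite_Cartesian_Product.vec_eq_iff)
  qed
  then show "qf_nonneg (prior A Q P - P)" "0 < trace (prior A Q P - P)"
    unfolding F_def[symmetric] gap
    by (simp_all add: qf_nonneg_sandwich qf_pos_imp_qf_nonneg S_pos trace_sandwich_pos)
qed

section \<open>Traces of the limiting expected covariances\<close>

lemma trace_Lyap_reset_less:
  fixes A Q P :: "real^'n^'n"
  assumes A: "exp_stable A"
    and gap: "qf_nonneg (prior A Q P - P)" "0 < trace (prior A Q P - P)"
    and p: "0 < p" "p \<le> 1"
  shows "trace (Lyap (sqrt (1 - p) *\<^sub>R A) (p *\<^sub>R P + (1 - p) *\<^sub>R Q)) < trace (Lyap A Q)"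
proof -
  define T where "T = sqrt (1 - p) *\<^sub>R A"
  define L where "L = Lyap A Q"
  define X where "X = Lyap T (p *\<^sub>R P + (1 - p) *\<^sub>R Q)"
  define G where "G = Lyap A (prior A Q P - P)"
  have T: "exp_stable T"
    unfolding T_def using p by (intro exp_stable_scaleR A) auto
  have sandwich_T: "sandwich T Y = (1 - p) *\<^sub>R sandwich A Y" for Y
    unfolding T_def sandwich_scaleR_left using p by simp
  have "sandwich T X = X - (p *\<^sub>R P + (1 - p) *\<^sub>R Q)"
    unfolding X_def by (rule sandwich_Lyap[OF T])
  moreover have "sandwich T L = (1 - p) *\<^sub>R (L - Q)"
    unfolding sandwich_T L_def by (simp add: sandwich_Lyap[OF A])
  ultimately have "sandwich T (X - L) + p *\<^sub>R (P - L)
      = (X - (p *\<^sub>R P + (1 - p) *\<^sub>R Q)) - (1 - p) *\<^sub>R (L - Q) + p *\<^sub>R (P - L)"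
    by (simp only: sandwich_diff)
  also have "\<dots> = X - L"
    by (simp add: algebra_simps)
  finally have "X - L = Lyap T (p *\<^sub>R (P - L))"
    by (rule Lyap_unique[OF T, OF sym])
  also have "P - L = - G"
    unfolding G_def L_def Lyap_diff_eq_Lyap_prior_diff[OF A, symmetric] by simp
  also have "Lyap T (p *\<^sub>R - G) = (- p) *\<^sub>R Lyap T G"
    using Lyap_scaleR[OF T, of "- p" G] by simp
  finally have "X - L = (- p) *\<^sub>R Lyap T G" .
  then have "trace X - trace L = - p * trace (Lyap T G)"
    by (simp only: trace_sub[symmetric] trace_scaleR)
  moreover have "trace (prior A Q P - P) \<le> trace (Lyap T G)"
    using trace_le_trace_Lyap[OF A gap(1)] trace_le_trace_Lyap[OF T qf_nonneg_Lyap[OF A gap(1)]]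
    unfolding G_def by linarith
  then have "0 < trace (Lyap T G)"
    using gap(2) by linarith
  then have "0 < p * trace (Lyap T G)"
    using p(1) by simp
  ultimately show ?thesis
    unfolding X_def L_def T_def by linarith
qed

lemma trace_Lyap_mixture_greater:
  fixes A Q P :: "real^'n^'n" and ge mu :: real
  defines "T \<equiv> sqrt ge *\<^sub>R A"
  assumes A: "exp_stable A" and Q: "qf_pos Q" and ge: "0 \<le> ge" "ge < 1"
    and threshold:
      "(ge * (trace (Lyap T Q) - trace (Lyap T P)) + trace (Lyap T P) - trace (Lyap A Q))
         / ((ge - 1) * (trace (Lyap T (Lyap A Q + P)) - trace (Lyap T P))) < mu"
  shows "trace (Lyap A Q) < trace (Lyap T
           (((1 - ge) * (1 - mu)) *\<^sub>R P + ((1 - ge) * mu) *\<^sub>R (Lyap A Q + P) + ge *\<^sub>R Q))"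
proof -
  define L where "L = Lyap A Q"
  define N where "N = ge * (trace (Lyap T Q) - trace (Lyap T P)) + trace (Lyap T P) - trace L"
  define D where "D = trace (Lyap T (L + P)) - trace (Lyap T P)"
  have T: "exp_stable T"
    unfolding T_def using ge by (intro exp_stable_scaleR A) auto
  have "0 < trace Q" by (rule trace_pos[OF Q])
  also have "trace Q \<le> trace L"
    unfolding L_def by (rule trace_le_trace_Lyap[OF A qf_pos_imp_qf_nonneg[OF Q]])
  also have "trace L \<le> trace (Lyap T L)"
    unfolding L_def by (intro trace_le_trace_Lyap T qf_nonneg_Lyap A qf_pos_imp_qf_nonneg Q)
  also have "\<dots> = D"
    unfolding D_def by (simp add: Lyap_add[OF T] trace_add)
  finally have "0 < D" .
  then have negative: "(ge - 1) * D < 0"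
    using ge mult_neg_pos[of "ge - 1" D] by simp
  have "N / ((ge - 1) * D) < mu"
    using threshold unfolding N_def D_def L_def .
  then have "mu * ((ge - 1) * D) < N"
    using neg_divide_less_eq[OF negative] by blast
  moreover have "trace (Lyap T (((1 - ge) * (1 - mu)) *\<^sub>R P + ((1 - ge) * mu) *\<^sub>R (L + P) + ge *\<^sub>R Q))
      = (1 - ge) * (1 - mu) * trace (Lyap T P) + (1 - ge) * mu * trace (Lyap T (L + P))
        + ge * trace (Lyap T Q)"
    by (simp only: Lyap_add[OF T] Lyap_scaleR[OF T] trace_add trace_scaleR)
  moreover have "\<dots> = trace L + N - mu * ((ge - 1) * D)"
    unfolding N_def D_def by (simp add: algebra_simps)
  ultimately show ?thesis
    unfolding L_def by linarith
qed

section \<open>Expected covariance of a randomly reset recursion\<close>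

primrec switched :: "('s \<Rightarrow> 'b \<Rightarrow> 'b) \<Rightarrow> 'b \<Rightarrow> (nat \<Rightarrow> 's) \<Rightarrow> nat \<Rightarrow> 'b" where
  "switched F Z0 \<sigma> 0 = Z0"
| "switched F Z0 \<sigma> (Suc k) = F (\<sigma> (Suc k)) (switched F Z0 \<sigma> k)"

lemma switched_cong:
  "(\<And>j. 1 \<le> j \<Longrightarrow> j \<le> k \<Longrightarrow> \<sigma> j = \<tau> j) \<Longrightarrow> switched F Z0 \<sigma> k = switched F Z0 \<tau> k"
  by (induction k) auto

lemma Pleg_eq_switched:
  "Pleg A Q Pbar P0 lam u k =
     (\<lambda>\<omega>. switched (\<lambda>s Y. if s = (1, 1) then Pbar else prior A Q Y) P0 (\<lambda>j. (lam j \<omega>, u j \<omega>)) k)"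
  by (rule ext, induction k) (simp_all add: prior_def)

lemma Peav_eq_switched:
  "Peav A Q Pbar Pn Pe0 lame u k =
     (\<lambda>\<omega>. switched (\<lambda>s Y. if s = (1, 1) then Pbar else if s = (1, 0) then Pn else prior A Q Y) Pe0
       (\<lambda>j. (lame j \<omega>, u j \<omega>)) k)"
  by (rule ext, induction k) (auto simp: prior_def)

lemma borel_measurable_prior: "prior A Q \<in> borel_measurable borel"
  unfolding prior_eq_sandwich[abs_def]
  by (intro borel_measurable_add borel_measurable_const
      borel_measurable_continuous_onI linear_continuous_on bounded_linear_sandwich)

lemma measurable_compose_countable_pair:
  fixes a :: "'x \<Rightarrow> 'i::countable" and b :: "'x \<Rightarrow> 'j::countable"
  assumes "\<And>s t. (\<lambda>x. f (s, t) x) \<in> measurable N L"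
    and "a \<in> measurable N (count_space UNIV)" "b \<in> measurable N (count_space UNIV)"
  shows "(\<lambda>x. f (a x, b x) x) \<in> measurable N L"
proof -
  have "(\<lambda>x. f (s, b x) x) \<in> measurable N L" for s
    by (rule measurable_compose_countable[where f = "\<lambda>t x. f (s, t) x"]) (use assms in auto)
  then show ?thesis
    by (rule measurable_compose_countable[where f = "\<lambda>s x. f (s, b x) x"]) (use assms in auto)
qed

lemma measurable_switched:
  fixes a :: "nat \<Rightarrow> 'x \<Rightarrow> 'i::countable" and b :: "nat \<Rightarrow> 'x \<Rightarrow> 'j::countable"
  assumes F: "\<And>s. F s \<in> borel_measurable borel"
    and a: "\<And>j. 1 \<le> j \<Longrightarrow> j \<le> k \<Longrightarrow> a j \<in> measurable N (count_space UNIV)"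
    and b: "\<And>j. 1 \<le> j \<Longrightarrow> j \<le> k \<Longrightarrow> b j \<in> measurable N (count_space UNIV)"
  shows "(\<lambda>x. switched F Z0 (\<lambda>j. (a j x, b j x)) k) \<in> borel_measurable N"
  using a b
proof (induction k)
  case (Suc k)
  let ?Z = "\<lambda>x. switched F Z0 (\<lambda>j. (a j x, b j x)) k"
  have "?Z \<in> borel_measurable N"
    using Suc by auto
  then have "(\<lambda>x. F (a (Suc k) x, b (Suc k) x) (?Z x)) \<in> borel_measurable N"
    by (rule measurable_compose_countable_pair[where f = "\<lambda>s x. F s (?Z x)", OF measurable_compose[OF _ F]])
       (use Suc.prems in auto)
  then show ?case by simp
qed simp

lemma measurable_reset_step:
  assumes F: "\<And>s Y. F s Y = (if s \<in> S then V else if s \<in> S' then V' else prior A Q Y)"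
  shows "F s \<in> borel_measurable borel"
  by (cases "s \<in> S"; cases "s \<in> S'") (simp_all add: F[abs_def] borel_measurable_prior)

lemma prior_bounded:
  assumes "\<And>x. norm (f x) \<le> B"
  obtains B' where "\<And>x. norm (prior A Q (f x)) \<le> B'"
proof -
  obtain K where K: "\<And>Y. norm (sandwich A Y) \<le> norm Y * K" "K > 0"
    using bounded_linear.pos_bounded[OF bounded_linear_sandwich] by blast
  have "norm (prior A Q (f x)) \<le> B * K + norm Q" for x
    unfolding prior_eq_sandwich
    by (rule order_trans[OF norm_triangle_ineq add_right_mono], rule order_trans[OF K(1)])
       (use assms K(2) in \<open>simp add: mult_right_mono\<close>)
  then show ?thesis using that by blast
qed

lemma switched_bounded:
  fixes A Q V V' Z0 :: "real^'n^'n"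
  assumes F: "\<And>s Y. F s Y = (if s \<in> S then V else if s \<in> S' then V' else prior A Q Y)"
  shows "\<exists>B. \<forall>\<sigma>. norm (switched F Z0 \<sigma> k) \<le> B"
proof (induction k)
  case (Suc k)
  then obtain B where "\<And>\<sigma>. norm (switched F Z0 \<sigma> k) \<le> B" by blast
  then obtain B' where "\<And>\<sigma>. norm (prior A Q (switched F Z0 \<sigma> k)) \<le> B'"
    using prior_bounded[where f = "\<lambda>\<sigma>. switched F Z0 \<sigma> k" and A = A and Q = Q] by blast
  then have "norm (switched F Z0 \<sigma> (Suc k)) \<le> max (norm V) (max (norm V') B')" for \<sigma>
    by (auto simp: F le_max_iff_disj)
  then show ?case by blast
qed auto

context prob_space
begin

lemma indep_var_integral_scaleR:
  fixes g :: "'c \<Rightarrow> real" and h :: "'c \<Rightarrow> 'b::euclidean_space"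
  assumes indep: "indep_var N1 \<phi> N2 \<psi>"
    and g: "g \<in> borel_measurable N1" "\<And>x. \<bar>g x\<bar> \<le> Bg"
    and h: "h \<in> borel_measurable N2" "\<And>y. norm (h y) \<le> Bh"
  shows "expectation (\<lambda>\<omega>. g (\<phi> \<omega>) *\<^sub>R h (\<psi> \<omega>))
           = expectation (\<lambda>\<omega>. g (\<phi> \<omega>)) *\<^sub>R expectation (\<lambda>\<omega>. h (\<psi> \<omega>))"
proof -
  have rv: "random_variable N1 \<phi>" "random_variable N2 \<psi>"
    using indep unfolding indep_var_eq by auto
  have g_int: "integrable M (\<lambda>\<omega>. g (\<phi> \<omega>))"
    by (rule integrable_const_bound[where B = Bg]) (use g measurable_compose[OF rv(1) g(1)] in auto)
  have h_int: "integrable M (\<lambda>\<omega>. h (\<psi> \<omega>))"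
    by (rule integrable_const_bound[where B = Bh]) (use h measurable_compose[OF rv(2) h(1)] in auto)
  have gh_int: "integrable M (\<lambda>\<omega>. g (\<phi> \<omega>) *\<^sub>R h (\<psi> \<omega>))"
    by (rule integrable_const_bound[where B = "Bg * Bh"])
       (use g h measurable_compose[OF rv(1) g(1)] measurable_compose[OF rv(2) h(1)]
        in \<open>auto intro!: mult_mono order_trans[OF abs_ge_zero g(2)]\<close>)
  show ?thesis
  proof (rule euclidean_eqI)
    fix e :: 'b assume "e \<in> Basis"
    have "indep_var borel (g \<circ> \<phi>) borel ((\<lambda>y. h y \<bullet> e) \<circ> \<psi>)"
      by (intro indep_var_compose[OF indep g(1)] borel_measurable_inner h(1)) simp
    then have "expectation (\<lambda>\<omega>. g (\<phi> \<omega>) * (h (\<psi> \<omega>) \<bullet> e))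
        = expectation (\<lambda>\<omega>. g (\<phi> \<omega>)) * expectation (\<lambda>\<omega>. h (\<psi> \<omega>) \<bullet> e)"
      using indep_var_lebesgue_integral[OF _ g_int integrable_inner_left[OF h_int]]
      by (simp add: comp_def)
    then show "expectation (\<lambda>\<omega>. g (\<phi> \<omega>) *\<^sub>R h (\<psi> \<omega>)) \<bullet> e
        = (expectation (\<lambda>\<omega>. g (\<phi> \<omega>)) *\<^sub>R expectation (\<lambda>\<omega>. h (\<psi> \<omega>))) \<bullet> e"
      using integral_inner_left[OF gh_int, of e] integral_inner_left[OF h_int, of e] by simp
  qed
qed

lemma random_variables_of_indep_pairs:
  assumes indep: "indep_vars (\<lambda>_. count_space UNIV) (\<lambda>i. case i of Inl k \<Rightarrow> a k | Inr k \<Rightarrow> b k)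
                    (Inl ` {1..} \<union> Inr ` {1..})" and "1 \<le> j"
  shows "a j \<in> measurable M (count_space UNIV)" "b j \<in> measurable M (count_space UNIV)"
  using indep \<open>1 \<le> j\<close> unfolding indep_vars_def by force+

lemma pair_event:
  fixes a :: "'a \<Rightarrow> 'i::countable" and b :: "'a \<Rightarrow> 'j::countable"
  assumes "a \<in> measurable M (count_space UNIV)" "b \<in> measurable M (count_space UNIV)"
  shows "{\<omega> \<in> space M. (a \<omega>, b \<omega>) \<in> S} \<in> events"
proof -
  have "(\<lambda>\<omega>. (a \<omega>, b \<omega>) \<in> S) \<in> measurable M (count_space UNIV)"
    by (rule measurable_compose_countable_pair[where f = "\<lambda>s \<omega>. s \<in> S"]) (use assms in auto)
  then show ?thesis by (simp add: pred_def)
qed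

lemma expectation_indicator_pair:
  fixes a :: "'a \<Rightarrow> 'i::countable" and b :: "'a \<Rightarrow> 'j::countable"
  assumes "a \<in> measurable M (count_space UNIV)" "b \<in> measurable M (count_space UNIV)"
  shows "expectation (\<lambda>\<omega>. indicator S (a \<omega>, b \<omega>) :: real) = prob {\<omega> \<in> space M. (a \<omega>, b \<omega>) \<in> S}"
proof -
  have "expectation (\<lambda>\<omega>. indicator S (a \<omega>, b \<omega>) :: real)
      = expectation (indicator {\<omega> \<in> space M. (a \<omega>, b \<omega>) \<in> S})"
    by (rule Bochner_Integration.integral_cong) (auto simp: indicator_def)
  then show ?thesis by (simp add: Int_absorb2)
qed

lemma prob_pair_not_in_union:
  fixes a :: "'a \<Rightarrow> 'i::countable" and b :: "'a \<Rightarrow> 'j::countable"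
  assumes "a \<in> measurable M (count_space UNIV)" "b \<in> measurable M (count_space UNIV)"
    and "S \<inter> S' = {}"
  shows "prob {\<omega> \<in> space M. (a \<omega>, b \<omega>) \<notin> S \<union> S'}
       = 1 - prob {\<omega> \<in> space M. (a \<omega>, b \<omega>) \<in> S} - prob {\<omega> \<in> space M. (a \<omega>, b \<omega>) \<in> S'}"
proof -
  have "{\<omega> \<in> space M. (a \<omega>, b \<omega>) \<notin> S \<union> S'}
      = space M - ({\<omega> \<in> space M. (a \<omega>, b \<omega>) \<in> S} \<union> {\<omega> \<in> space M. (a \<omega>, b \<omega>) \<in> S'})"
    by auto
  moreover have "{\<omega> \<in> space M. (a \<omega>, b \<omega>) \<in> S} \<inter> {\<omega> \<in> space M. (a \<omega>, b \<omega>) \<in> S'} = {}"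
    using assms(3) by auto
  ultimately show ?thesis
    using pair_event[OF assms(1,2)] by (simp add: prob_compl finite_measure_Union)
qed

lemma integrable_prior:
  assumes "integrable M Z"
  shows "integrable M (\<lambda>\<omega>. prior A Q (Z \<omega>))"
  unfolding prior_eq_sandwich
  by (intro Bochner_Integration.integrable_add integrable_const
      integrable_bounded_linear[OF bounded_linear_sandwich assms])

lemma expectation_prior:
  assumes "integrable M Z"
  shows "expectation (\<lambda>\<omega>. prior A Q (Z \<omega>)) = prior A Q (expectation Z)"
proof -
  have "expectation (\<lambda>\<omega>. sandwich A (Z \<omega>) + Q)
      = expectation (\<lambda>\<omega>. sandwich A (Z \<omega>)) + expectation (\<lambda>\<omega>. Q)"
    by (rule Bochner_Integration.integral_add[OF integrable_bounded_linear[OF bounded_linear_sandwich assms]])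
       simp
  also have "expectation (\<lambda>\<omega>. Q) = Q"
    by (simp add: prob_space)
  finally have "expectation (\<lambda>\<omega>. sandwich A (Z \<omega>) + Q) = expectation (\<lambda>\<omega>. sandwich A (Z \<omega>)) + Q" .
  then show ?thesis
    unfolding prior_eq_sandwich integral_bounded_linear[OF bounded_linear_sandwich assms] .
qed

lemma integrable_switched:
  fixes a b :: "nat \<Rightarrow> 'a \<Rightarrow> nat" and A Q V V' Z0 :: "real^'n^'n"
  assumes indep: "indep_vars (\<lambda>_. count_space UNIV) (\<lambda>i. case i of Inl k \<Rightarrow> a k | Inr k \<Rightarrow> b k)
                    (Inl ` {1..} \<union> Inr ` {1..})"
    and F: "\<And>s Y. F s Y = (if s \<in> S then V else if s \<in> S' then V' else prior A Q Y)"
  shows "integrable M (\<lambda>\<omega>. switched F Z0 (\<lambda>j. (a j \<omega>, b j \<omega>)) k)"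
proof -
  obtain B where "\<And>\<sigma>. norm (switched F Z0 \<sigma> k) \<le> B"
    using switched_bounded[OF F] by blast
  then show ?thesis
    by (intro integrable_const_bound[where B = B] AE_I2 measurable_switched[OF measurable_reset_step[OF F]])
       (auto intro: random_variables_of_indep_pairs[OF indep])
qed

text \<open>The state after \<open>k\<close> steps is a function of the switches \<open>1, \<dots>, k\<close> only, which are
  independent of the switch at time \<open>k + 1\<close>.\<close>

lemma expectation_fresh_switch_times_past:
  fixes a b :: "nat \<Rightarrow> 'a \<Rightarrow> nat" and A Q V V' Z0 :: "real^'n^'n"
  assumes indep: "indep_vars (\<lambda>_. count_space UNIV) (\<lambda>i. case i of Inl k \<Rightarrow> a k | Inr k \<Rightarrow> b k)
                    (Inl ` {1..} \<union> Inr ` {1..})"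
    and F: "\<And>s Y. F s Y = (if s \<in> S then V else if s \<in> S' then V' else prior A Q Y)"
  shows "expectation (\<lambda>\<omega>. indicator R (a (Suc k) \<omega>, b (Suc k) \<omega>) *\<^sub>R
             prior A Q (switched F Z0 (\<lambda>j. (a j \<omega>, b j \<omega>)) k))
       = prob {\<omega> \<in> space M. (a (Suc k) \<omega>, b (Suc k) \<omega>) \<in> R} *\<^sub>R
             prior A Q (expectation (\<lambda>\<omega>. switched F Z0 (\<lambda>j. (a j \<omega>, b j \<omega>)) k))"
proof -
  define X where "X = (\<lambda>i. case i of Inl k \<Rightarrow> a k | Inr k \<Rightarrow> b k)"
  define cs where "cs = (\<lambda>_::nat + nat. count_space (UNIV :: nat set))"
  define now :: "(nat + nat) set" where "now = {Inl (Suc k), Inr (Suc k)}"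
  define past :: "(nat + nat) set" where "past = Inl ` {1..k} \<union> Inr ` {1..k}"
  define g :: "(nat + nat \<Rightarrow> nat) \<Rightarrow> real" where "g x = indicator R (x (Inl (Suc k)), x (Inr (Suc k)))" for x
  define h where "h x = prior A Q (switched F Z0 (\<lambda>j. (x (Inl j), x (Inr j))) k)" for x
  note rv = random_variables_of_indep_pairs[OF indep]
  have component: "(\<lambda>x. x i) \<in> measurable (PiM I cs) (count_space UNIV)" if "i \<in> I" for i I
    using measurable_component_singleton[OF that, of cs] by (simp add: cs_def)
  have indep_now_past: "indep_var (PiM now cs) (\<lambda>\<omega>. restrict (\<lambda>i. X i \<omega>) now) (PiM past cs) (\<lambda>\<omega>. restrict (\<lambda>i. X i \<omega>) past)"
    by (rule indep_var_restrict[OF indep[folded X_def cs_def]]) (auto simp: now_def past_def)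
  have g_meas: "g \<in> borel_measurable (PiM now cs)"
    unfolding g_def
    by (rule measurable_compose_countable_pair[where f = "\<lambda>s x. indicator R s"])
       (auto simp: now_def intro: component)
  have h_meas: "h \<in> borel_measurable (PiM past cs)"
    unfolding h_def
    by (rule measurable_compose[OF measurable_switched[OF measurable_reset_step[OF F]] borel_measurable_prior])
       (auto simp: past_def intro: component)
  obtain B0 where "\<And>\<sigma>. norm (switched F Z0 \<sigma> k) \<le> B0"
    using switched_bounded[OF F] by blast
  then obtain B where B: "\<And>\<sigma>. norm (prior A Q (switched F Z0 \<sigma> k)) \<le> B"
    using prior_bounded[where f = "\<lambda>\<sigma>. switched F Z0 \<sigma> k" and A = A and Q = Q] by blast
  have "expectation (\<lambda>\<omega>. g (restrict (\<lambda>i. X i \<omega>) now) *\<^sub>R h (restrict (\<lambda>i. X i \<omega>) past))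
      = expectation (\<lambda>\<omega>. g (restrict (\<lambda>i. X i \<omega>) now)) *\<^sub>R expectation (\<lambda>\<omega>. h (restrict (\<lambda>i. X i \<omega>) past))"
    by (rule indep_var_integral_scaleR[OF indep_now_past g_meas _ h_meas, where Bg = 1 and Bh = B])
       (simp_all add: g_def h_def B)
  moreover have "g (restrict (\<lambda>i. X i \<omega>) now) = indicator R (a (Suc k) \<omega>, b (Suc k) \<omega>)" for \<omega>
    by (simp add: g_def X_def now_def)
  moreover have "h (restrict (\<lambda>i. X i \<omega>) past) = prior A Q (switched F Z0 (\<lambda>j. (a j \<omega>, b j \<omega>)) k)" for \<omega>
    unfolding h_def by (intro arg_cong[where f = "prior A Q"] switched_cong) (auto simp: X_def past_def)
  moreover note integrable_switched[OF indep F, of Z0 k]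
  moreover have "a (Suc k) \<in> measurable M (count_space UNIV)" "b (Suc k) \<in> measurable M (count_space UNIV)"
    by (simp_all add: rv)
  ultimately show ?thesis
    by (simp add: expectation_indicator_pair expectation_prior)
qed

lemma expectation_switched_Suc:
  fixes a b :: "nat \<Rightarrow> 'a \<Rightarrow> nat" and A Q V V' Z0 :: "real^'n^'n"
  assumes indep: "indep_vars (\<lambda>_. count_space UNIV) (\<lambda>i. case i of Inl k \<Rightarrow> a k | Inr k \<Rightarrow> b k)
                    (Inl ` {1..} \<union> Inr ` {1..})"
    and F: "\<And>s Y. F s Y = (if s \<in> S then V else if s \<in> S' then V' else prior A Q Y)"
    and disjoint: "S \<inter> S' = {}"
  shows "expectation (\<lambda>\<omega>. switched F Z0 (\<lambda>j. (a j \<omega>, b j \<omega>)) (Suc k))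
       = prob {\<omega> \<in> space M. (a (Suc k) \<omega>, b (Suc k) \<omega>) \<in> S} *\<^sub>R V
         + prob {\<omega> \<in> space M. (a (Suc k) \<omega>, b (Suc k) \<omega>) \<in> S'} *\<^sub>R V'
         + prob {\<omega> \<in> space M. (a (Suc k) \<omega>, b (Suc k) \<omega>) \<notin> S \<union> S'} *\<^sub>R
             prior A Q (expectation (\<lambda>\<omega>. switched F Z0 (\<lambda>j. (a j \<omega>, b j \<omega>)) k))"
proof -
  define ind :: "(nat \<times> nat) set \<Rightarrow> 'a \<Rightarrow> real"
    where "ind R \<omega> = indicator R (a (Suc k) \<omega>, b (Suc k) \<omega>)" for R \<omega>
  define Z where "Z = (\<lambda>\<omega>. switched F Z0 (\<lambda>j. (a j \<omega>, b j \<omega>)) k)"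
  have rv: "a (Suc k) \<in> measurable M (count_space UNIV)" "b (Suc k) \<in> measurable M (count_space UNIV)"
    by (simp_all add: random_variables_of_indep_pairs[OF indep])
  have ind_meas: "ind R \<in> borel_measurable M" for R
    unfolding ind_def by (rule measurable_compose_countable_pair[where f = "\<lambda>s \<omega>. indicator R s", OF _ rv]) simp
  have scaled_int: "integrable M (\<lambda>\<omega>. ind R \<omega> *\<^sub>R Y \<omega>)" if "integrable M Y" for R and Y :: "'a \<Rightarrow> real^'n^'n"
    by (rule Bochner_Integration.integrable_bound[OF that
          borel_measurable_scaleR[OF ind_meas borel_measurable_integrable[OF that]]])
       (auto simp: ind_def indicator_def)
  have ind_int: "integrable M (ind R)" for R
    using ind_meas by (intro integrable_const_bound[where B = 1]) (auto simp: ind_def)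
  have Z_int: "integrable M Z"
    unfolding Z_def by (rule integrable_switched[OF indep F])
  have split: "switched F Z0 (\<lambda>j. (a j \<omega>, b j \<omega>)) (Suc k)
      = ind S \<omega> *\<^sub>R V + ind S' \<omega> *\<^sub>R V' + ind (- (S \<union> S')) \<omega> *\<^sub>R prior A Q (Z \<omega>)" for \<omega>
    using disjoint by (auto simp: ind_def Z_def F indicator_def)
  have "expectation (\<lambda>\<omega>. switched F Z0 (\<lambda>j. (a j \<omega>, b j \<omega>)) (Suc k))
      = expectation (\<lambda>\<omega>. ind S \<omega> *\<^sub>R V) + expectation (\<lambda>\<omega>. ind S' \<omega> *\<^sub>R V')
        + expectation (\<lambda>\<omega>. ind (- (S \<union> S')) \<omega> *\<^sub>R prior A Q (Z \<omega>))"
    unfolding split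
    by (simp add: scaled_int Z_int integrable_prior)
  also have "\<dots> = prob {\<omega> \<in> space M. (a (Suc k) \<omega>, b (Suc k) \<omega>) \<in> S} *\<^sub>R V
         + prob {\<omega> \<in> space M. (a (Suc k) \<omega>, b (Suc k) \<omega>) \<in> S'} *\<^sub>R V'
         + prob {\<omega> \<in> space M. (a (Suc k) \<omega>, b (Suc k) \<omega>) \<notin> S \<union> S'} *\<^sub>R prior A Q (expectation Z)"
    unfolding ind_def Z_def
    by (simp add: ind_int[unfolded ind_def] expectation_indicator_pair[OF rv]
        expectation_fresh_switch_times_past[OF indep F])
  finally show ?thesis
    unfolding Z_def .
qed

lemma expectation_switched_tendsto:
  fixes a b :: "nat \<Rightarrow> 'a \<Rightarrow> nat" and A Q V V' Z0 :: "real^'n^'n"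
  assumes indep: "indep_vars (\<lambda>_. count_space UNIV) (\<lambda>i. case i of Inl k \<Rightarrow> a k | Inr k \<Rightarrow> b k)
                    (Inl ` {1..} \<union> Inr ` {1..})"
    and F: "\<And>s Y. F s Y = (if s \<in> S then V else if s \<in> S' then V' else prior A Q Y)"
    and disjoint: "S \<inter> S' = {}"
    and p: "\<And>j. 1 \<le> j \<Longrightarrow> prob {\<omega> \<in> space M. (a j \<omega>, b j \<omega>) \<in> S} = p"
    and p': "\<And>j. 1 \<le> j \<Longrightarrow> prob {\<omega> \<in> space M. (a j \<omega>, b j \<omega>) \<in> S'} = p'"
    and A: "exp_stable A"
  shows "(\<lambda>k. expectation (\<lambda>\<omega>. switched F Z0 (\<lambda>j. (a j \<omega>, b j \<omega>)) k))
           \<longlonglongrightarrow> Lyap (sqrt (1 - p - p') *\<^sub>R A) (p *\<^sub>R V + p' *\<^sub>R V' + (1 - p - p') *\<^sub>R Q)"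
proof -
  define c where "c = 1 - p - p'"
  have rest: "prob {\<omega> \<in> space M. (a j \<omega>, b j \<omega>) \<notin> S \<union> S'} = c" if "1 \<le> j" for j
    using prob_pair_not_in_union[OF random_variables_of_indep_pairs[OF indep that] disjoint] p p' that
    unfolding c_def by simp
  have "c = prob {\<omega> \<in> space M. (a 1 \<omega>, b 1 \<omega>) \<notin> S \<union> S'}"
    using rest[of 1] by simp
  then have c: "0 \<le> c" "c \<le> 1"
    by simp_all
  have step: "expectation (\<lambda>\<omega>. switched F Z0 (\<lambda>j. (a j \<omega>, b j \<omega>)) (Suc k))
      = sandwich (sqrt c *\<^sub>R A) (expectation (\<lambda>\<omega>. switched F Z0 (\<lambda>j. (a j \<omega>, b j \<omega>)) k))
        + (p *\<^sub>R V + p' *\<^sub>R V' + c *\<^sub>R Q)" for k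
  proof -
    have j: "1 \<le> Suc k" by simp
    show ?thesis
      unfolding expectation_switched_Suc[OF indep F disjoint] p[OF j] p'[OF j] rest[OF j]
      using c by (simp add: sandwich_scaleR_left prior_eq_sandwich algebra_simps)
  qed
  have "exp_stable (sqrt c *\<^sub>R A)"
    using c by (intro exp_stable_scaleR A) auto
  then show ?thesis
    unfolding c_def[symmetric] by (rule Lyap_iterates_tendsto) (rule step)
qed

lemma prob_pair_singleton:
  fixes a b :: "nat \<Rightarrow> 'a \<Rightarrow> nat"
  assumes indep: "indep_vars (\<lambda>_. count_space UNIV) (\<lambda>i. case i of Inl k \<Rightarrow> a k | Inr k \<Rightarrow> b k)
                    (Inl ` {1..} \<union> Inr ` {1..})" and "1 \<le> j"
  shows "prob {\<omega> \<in> space M. (a j \<omega>, b j \<omega>) \<in> {(x, y)}}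
       = prob {\<omega> \<in> space M. a j \<omega> = x} * prob {\<omega> \<in> space M. b j \<omega> = y}"
proof -
  define X where "X = (\<lambda>i. case i of Inl k \<Rightarrow> a k | Inr k \<Rightarrow> b k)"
  define E :: "nat + nat \<Rightarrow> nat set" where "E = (\<lambda>i. case i of Inl _ \<Rightarrow> {x} | Inr _ \<Rightarrow> {y})"
  have "prob (\<Inter>i\<in>{Inl j, Inr j}. X i -` E i \<inter> space M) = (\<Prod>i\<in>{Inl j, Inr j}. prob (X i -` E i \<inter> space M))"
    by (rule indep_varsD[OF indep[folded X_def]]) (use \<open>1 \<le> j\<close> in auto)
  moreover have "(\<Inter>i\<in>{Inl j, Inr j}. X i -` E i \<inter> space M) = {\<omega> \<in> space M. (a j \<omega>, b j \<omega>) \<in> {(x, y)}}"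
    by (auto simp: X_def E_def)
  moreover have "X (Inl j) -` E (Inl j) \<inter> space M = {\<omega> \<in> space M. a j \<omega> = x}"
    "X (Inr j) -` E (Inr j) \<inter> space M = {\<omega> \<in> space M. b j \<omega> = y}"
    by (auto simp: X_def E_def)
  ultimately show ?thesis by simp
qed

lemma prob_eq_1_if_binary:
  fixes f :: "'a \<Rightarrow> nat"
  assumes "f \<in> measurable M (count_space UNIV)" and "\<And>\<omega>. \<omega> \<in> space M \<Longrightarrow> f \<omega> \<in> {0, 1}"
  shows "prob {\<omega> \<in> space M. f \<omega> = 1} = 1 - prob {\<omega> \<in> space M. f \<omega> = 0}"
proof -
  have "{\<omega> \<in> space M. f \<omega> = 0} = f -` {0} \<inter> space M"
    by auto
  then have "{\<omega> \<in> space M. f \<omega> = 0} \<in> events"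
    using measurable_sets[OF assms(1)] by simp
  moreover have "{\<omega> \<in> space M. f \<omega> = 1} = space M - {\<omega> \<in> space M. f \<omega> = 0}"
    using assms(2) by force
  ultimately show ?thesis
    by (simp add: prob_compl)
qed

lemma prob_binary_pair:
  fixes a b :: "nat \<Rightarrow> 'a \<Rightarrow> nat"
  assumes indep: "indep_vars (\<lambda>_. count_space UNIV) (\<lambda>i. case i of Inl k \<Rightarrow> a k | Inr k \<Rightarrow> b k)
                    (Inl ` {1..} \<union> Inr ` {1..})" and "1 \<le> j"
    and binary: "\<And>\<omega>. \<omega> \<in> space M \<Longrightarrow> a j \<omega> \<in> {0, 1} \<and> b j \<omega> \<in> {0, 1}"
    and "prob {\<omega> \<in> space M. a j \<omega> = 0} = \<alpha>" "prob {\<omega> \<in> space M. b j \<omega> = 0} = \<beta>"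
  shows "prob {\<omega> \<in> space M. (a j \<omega>, b j \<omega>) \<in> {(1, 1)}} = (1 - \<alpha>) * (1 - \<beta>)"
    and "prob {\<omega> \<in> space M. (a j \<omega>, b j \<omega>) \<in> {(1, 0)}} = (1 - \<alpha>) * \<beta>"
  using prob_pair_singleton[OF indep \<open>1 \<le> j\<close>] assms(4,5) binary
    prob_eq_1_if_binary[OF random_variables_of_indep_pairs(1)[OF indep \<open>1 \<le> j\<close>]]
    prob_eq_1_if_binary[OF random_variables_of_indep_pairs(2)[OF indep \<open>1 \<le> j\<close>]]
  by auto

lemma expectation_Pleg_tendsto:
  assumes indep: "indep_vars (\<lambda>_. count_space UNIV) (\<lambda>i. case i of Inl k \<Rightarrow> lam k | Inr k \<Rightarrow> u k)
                    (Inl ` {1..} \<union> Inr ` {1..})"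
    and binary: "\<And>j \<omega>. 1 \<le> j \<Longrightarrow> \<omega> \<in> space M \<Longrightarrow> lam j \<omega> \<in> {0, 1} \<and> u j \<omega> \<in> {0, 1}"
    and "\<And>j. 1 \<le> j \<Longrightarrow> prob {\<omega> \<in> space M. lam j \<omega> = 0} = \<gamma>"
    and "\<And>j. 1 \<le> j \<Longrightarrow> prob {\<omega> \<in> space M. u j \<omega> = 0} = \<mu>"
    and "exp_stable A"
  shows "(\<lambda>k. expectation (Pleg A Q Pbar P0 lam u k)) \<longlonglongrightarrow>
           Lyap (sqrt (1 - (1 - \<gamma>) * (1 - \<mu>)) *\<^sub>R A)
             (((1 - \<gamma>) * (1 - \<mu>)) *\<^sub>R Pbar + (1 - (1 - \<gamma>) * (1 - \<mu>)) *\<^sub>R Q)"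
proof -
  have reset: "prob {\<omega> \<in> space M. (lam j \<omega>, u j \<omega>) \<in> {(1, 1)}} = (1 - \<gamma>) * (1 - \<mu>)"
    if "1 \<le> j" for j
    by (rule prob_binary_pair(1)[OF indep that binary[OF that] assms(3,4)[OF that]])
  have "(\<lambda>k. expectation (\<lambda>\<omega>. switched (\<lambda>s Y. if s = (1, 1) then Pbar else prior A Q Y) P0
          (\<lambda>j. (lam j \<omega>, u j \<omega>)) k)) \<longlonglongrightarrow>
      Lyap (sqrt (1 - (1 - \<gamma>) * (1 - \<mu>) - 0) *\<^sub>R A)
        (((1 - \<gamma>) * (1 - \<mu>)) *\<^sub>R Pbar + 0 *\<^sub>R 0 + (1 - (1 - \<gamma>) * (1 - \<mu>) - 0) *\<^sub>R Q)"
    by (rule expectation_switched_tendsto[where S' = "{}", OF indep _ _ reset _ \<open>exp_stable A\<close>]) auto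
  then show ?thesis
    unfolding Pleg_eq_switched by simp
qed

lemma expectation_Peav_tendsto:
  assumes indep: "indep_vars (\<lambda>_. count_space UNIV) (\<lambda>i. case i of Inl k \<Rightarrow> lame k | Inr k \<Rightarrow> u k)
                    (Inl ` {1..} \<union> Inr ` {1..})"
    and binary: "\<And>j \<omega>. 1 \<le> j \<Longrightarrow> \<omega> \<in> space M \<Longrightarrow> lame j \<omega> \<in> {0, 1} \<and> u j \<omega> \<in> {0, 1}"
    and "\<And>j. 1 \<le> j \<Longrightarrow> prob {\<omega> \<in> space M. lame j \<omega> = 0} = \<gamma>"
    and "\<And>j. 1 \<le> j \<Longrightarrow> prob {\<omega> \<in> space M. u j \<omega> = 0} = \<mu>"
    and "exp_stable A"
  shows "(\<lambda>k. expectation (Peav A Q Pbar Pn Pinit lame u k)) \<longlonglongrightarrow>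
           Lyap (sqrt \<gamma> *\<^sub>R A) (((1 - \<gamma>) * (1 - \<mu>)) *\<^sub>R Pbar + ((1 - \<gamma>) * \<mu>) *\<^sub>R Pn + \<gamma> *\<^sub>R Q)"
proof -
  have reset: "prob {\<omega> \<in> space M. (lame j \<omega>, u j \<omega>) \<in> {(1, 1)}} = (1 - \<gamma>) * (1 - \<mu>)"
    and fake: "prob {\<omega> \<in> space M. (lame j \<omega>, u j \<omega>) \<in> {(1, 0)}} = (1 - \<gamma>) * \<mu>" if "1 \<le> j" for j
    using prob_binary_pair[OF indep that binary[OF that] assms(3,4)[OF that]] by auto
  have "(\<lambda>k. expectation (Peav A Q Pbar Pn Pinit lame u k)) \<longlonglongrightarrow>
      Lyap (sqrt (1 - (1 - \<gamma>) * (1 - \<mu>) - (1 - \<gamma>) * \<mu>) *\<^sub>R A) (((1 - \<gamma>) * (1 - \<mu>)) *\<^sub>R Pbar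
        + ((1 - \<gamma>) * \<mu>) *\<^sub>R Pn + (1 - (1 - \<gamma>) * (1 - \<mu>) - (1 - \<gamma>) * \<mu>) *\<^sub>R Q)"
    unfolding Peav_eq_switched
    by (rule expectation_switched_tendsto[OF indep _ _ reset fake \<open>exp_stable A\<close>]) auto
  moreover have "1 - (1 - \<gamma>) * (1 - \<mu>) - (1 - \<gamma>) * \<mu> = \<gamma>"
    by (simp add: algebra_simps)
  ultimately show ?thesis
    by (simp only:)
qed

end

theorem theorem1:
  fixes A :: "real^'n^'n" and C :: "real^'n^'m" and Q :: "real^'n^'n" and R :: "real^'m^'m"
    and Pbar P0 Pe0 :: "real^'n^'n"
    and gbar ge mu :: real
    and M :: "'a measure"
    and lam lame u :: "nat \<Rightarrow> 'a \<Rightarrow> nat"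
  assumes hA: "spectral_radius A < 1"
    and hQ: "pd Q" and hR: "pd R"
    and hobs: "observable A C"
    and hctr: "controllable A (msqrt Q)"
    and hPbar: "pd Pbar" "Pbar = riccati A C Q R Pbar" "stabilizing A C Q R Pbar"
    and hgbar: "0 \<le> gbar" "gbar < 1"
    and hge: "0 \<le> ge" "ge < 1"
    and hmu: "0 < mu" "mu < 1"
    and hM: "prob_space M"
    and hvals: "\<And>k \<omega>. k \<ge> 1 \<Longrightarrow> \<omega> \<in> space M \<Longrightarrow>
                  lam k \<omega> \<in> {0,1} \<and> lame k \<omega> \<in> {0,1} \<and> u k \<omega> \<in> {0,1}"
    and hdist: "\<And>k. k \<ge> 1 \<Longrightarrow>
                  measure M {\<omega> \<in> space M. lam k \<omega> = 0} = gbar \<and>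
                  measure M {\<omega> \<in> space M. lame k \<omega> = 0} = ge \<and>
                  measure M {\<omega> \<in> space M. u k \<omega> = 0} = mu"
    and hindep: "prob_space.indep_vars M (\<lambda>_. count_space UNIV)
                   (\<lambda>i. case i of Inl k \<Rightarrow> lam k | Inr k \<Rightarrow> u k)
                   (Inl ` {1..} \<union> Inr ` {1..})"
    and hindep_e: "prob_space.indep_vars M (\<lambda>_. count_space UNIV)
                   (\<lambda>i. case i of Inl k \<Rightarrow> lame k | Inr k \<Rightarrow> u k)
                   (Inl ` {1..} \<union> Inr ` {1..})"
    and hP0: "psd P0" and hPe0: "psd Pe0"
    and hmuop:
      "(let POP = Lyap A Q; Pn = POP + Pbar;
            W = Lyap (sqrt ge *\<^sub>R A) Pbar; S = Lyap (sqrt ge *\<^sub>R A) Q;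
            H = Lyap (sqrt ge *\<^sub>R A) Pn
        in (ge * (trace S - trace W) + trace W - trace POP)
           / ((ge - 1) * (trace H - trace W))) < mu"
  shows "(\<exists>Pinf. (\<lambda>k. prob_space.expectation M (Pleg A Q Pbar P0 lam u k)) \<longlonglongrightarrow> Pinf
            \<and> trace Pinf < trace (Lyap A Q))
       \<and> (\<exists>Pinf. (\<lambda>k. prob_space.expectation M
                     (Peav A Q Pbar (Lyap A Q + Pbar) Pe0 lame u k)) \<longlonglongrightarrow> Pinf
            \<and> trace (Lyap A Q) < trace Pinf)"
proof -
  \<comment> \<open>The limits do not depend on \<open>P0\<close>, \<open>Pe0\<close>.\<close>
  interpret prob_space M by (rule hM)
  have A: "exp_stable A"
    by (rule exp_stable_if_spectral_radius_less_1[OF hA])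
  have binary: "lam j \<omega> \<in> {0, 1} \<and> u j \<omega> \<in> {0, 1}" "lame j \<omega> \<in> {0, 1} \<and> u j \<omega> \<in> {0, 1}"
    if "1 \<le> j" "\<omega> \<in> space M" for j \<omega>
    using hvals[OF that] by auto
  have marginals: "prob {\<omega> \<in> space M. lam j \<omega> = 0} = gbar" "prob {\<omega> \<in> space M. lame j \<omega> = 0} = ge"
    "prob {\<omega> \<in> space M. u j \<omega> = 0} = mu" if "1 \<le> j" for j
    using hdist[OF that] by auto
  define p where "p = (1 - gbar) * (1 - mu)"
  have "(\<lambda>k. expectation (Pleg A Q Pbar P0 lam u k)) \<longlonglongrightarrow>
      Lyap (sqrt (1 - p) *\<^sub>R A) (p *\<^sub>R Pbar + (1 - p) *\<^sub>R Q)"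
    unfolding p_def by (rule expectation_Pleg_tendsto[OF hindep binary(1) marginals(1,3) A])
  moreover have "trace (Lyap (sqrt (1 - p) *\<^sub>R A) (p *\<^sub>R Pbar + (1 - p) *\<^sub>R Q)) < trace (Lyap A Q)"
    using riccati_fixpoint_gap[OF hQ hR pd_imp_psd[OF hPbar(1)] observable_imp_nonzero[OF hobs] hPbar(2)]
      hgbar hmu unfolding p_def by (intro trace_Lyap_reset_less A) (auto intro: mult_le_one)
  moreover have "(\<lambda>k. expectation (Peav A Q Pbar (Lyap A Q + Pbar) Pe0 lame u k)) \<longlonglongrightarrow>
      Lyap (sqrt ge *\<^sub>R A) (((1 - ge) * (1 - mu)) *\<^sub>R Pbar + ((1 - ge) * mu) *\<^sub>R (Lyap A Q + Pbar) + ge *\<^sub>R Q)"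
    by (rule expectation_Peav_tendsto[OF hindep_e binary(2) marginals(2,3) A])
  moreover have "trace (Lyap A Q) < trace (Lyap (sqrt ge *\<^sub>R A)
      (((1 - ge) * (1 - mu)) *\<^sub>R Pbar + ((1 - ge) * mu) *\<^sub>R (Lyap A Q + Pbar) + ge *\<^sub>R Q))"
    using hQ hge hmuop unfolding pd_iff_symmetric_qf_pos Let_def
    by (intro trace_Lyap_mixture_greater A) auto
  ultimately show ?thesis
    by blast
qed

end
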